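(* Let $\mathcal{T}=\mathcal{T}_1\cup\dots\cup\mathcal{T}_d$ be a compact interval partitioned into pairwise disjoint subintervals, $\boldsymbol{\phi}=(\phi_1,\dots,\phi_m)'$ linearly independent functions in $L^2(\mathcal{T})$, $\mathbf{W}=\int_{\mathcal{T}}\boldsymbol{\phi}(t)\boldsymbol{\phi}'(t)dt$ and $\mathbf{W}_{\mathcal{T}_a}=\int_{\mathcal{T}_a}\boldsymbol{\phi}(t)\boldsymbol{\phi}'(t)dt$. Let $X(t)=\mathbf{a}'\boldsymbol{\phi}(t)$ be a rank $m$ univariate stochastic process with random coefficient vector $\mathbf{a}\in\mathbb{R}^m$, mean $\mu(t)=\mathbf{m}_{\mathbf{a}}'\boldsymbol{\phi}(t)$ where $\mathbf{m}_{\mathbf{a}}=E\mathbf{a}$, and covariance $\kappa(s,t)=\boldsymbol{\phi}'(s)\boldsymbol{\Sigma}\boldsymbol{\phi}(t)$ where $\boldsymbol{\Sigma}=\mathrm{Cov}(\mathbf{a})$ is positive definite. Then for each $a\in\{1,\dots,d\}$, $$\theta_{\mathcal{T}_a}(X,\mu;\kappa,m)=(\mathbf{a}-\mathbf{m}_{\mathbf{a}})'\mathbf{W}_{\mathcal{T}_a}\mathbf{W}^{-1}\boldsymbol{\Sigma}^{-1}(\mathbf{a}-\mathbf{m}_{\mathbf{a}}).$$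
   Context: Let $(\lambda_i,\xi_i)$, $i=1,\dots,m$, be the eigenpairs (nonincreasing eigenvalues) of the integral operator with kernel $\kappa$, $\langle f,g\rangle=\int_{\mathcal{T}}fg$, $\langle f,g\rangle_{\mathcal{T}_a}=\int_{\mathcal{T}_a}fg$, and $\mathrm{fmd}^2(Y,\mu;\kappa,m)=\sum_{i=1}^m\lambda_i^{-1}\langle Y-\mu,\xi_i\rangle^2$. With $D=\{1,\dots,d\}$, $\hat X^R(t)=X(t)$ for $t\in\bigcup_{b\in R}\mathcal{T}_b$ and $\hat X^R(t)=\mu(t)$ otherwise, the time-specific Shapley outlyingness contribution is $\theta_{\mathcal{T}_a}(X,\mu;\kappa,m)=\sum_{R\subseteq D\setminus\{a\}}\frac{|R|!(d-|R|-1)!}{d!}\big[\mathrm{fmd}^2(\hat X^{R\cup\{a\}},\mu;\kappa,m)-\mathrm{fmd}^2(\hat X^R,\mu;\kappa,m)\big]$. *)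

theory Defs
  imports "HOL-Probability.Probability"
begin

definition L2_on :: "real set \<Rightarrow> (real \<Rightarrow> real) \<Rightarrow> bool" where
  "L2_on T f \<longleftrightarrow> f \<in> borel_measurable (lebesgue_on T) \<and>
                  integrable (lebesgue_on T) (\<lambda>t. (f t)^2)"

definition ipT :: "real set \<Rightarrow> (real \<Rightarrow> real) \<Rightarrow> (real \<Rightarrow> real) \<Rightarrow> real" where
  "ipT T f g = integral\<^sup>L (lebesgue_on T) (\<lambda>t. f t * g t)"

definition intop :: "real set \<Rightarrow> (real \<Rightarrow> real \<Rightarrow> real) \<Rightarrow> (real \<Rightarrow> real) \<Rightarrow> real \<Rightarrow> real" where
  "intop T \<kappa> f s = integral\<^sup>L (lebesgue_on T) (\<lambda>t. \<kappa> s t * f t)"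

definition eigenpair :: "real set \<Rightarrow> (real \<Rightarrow> real \<Rightarrow> real) \<Rightarrow> real \<Rightarrow> (real \<Rightarrow> real) \<Rightarrow> bool" where
  "eigenpair T \<kappa> \<mu> f \<longleftrightarrow> L2_on T f \<and> \<not> (AE t in lebesgue_on T. f t = 0) \<and>
     (AE s in lebesgue_on T. intop T \<kappa> f s = \<mu> * f s)"

definition leading_eigenpairs ::
  "real set \<Rightarrow> (real \<Rightarrow> real \<Rightarrow> real) \<Rightarrow> nat \<Rightarrow> (nat \<Rightarrow> real) \<Rightarrow> (nat \<Rightarrow> real \<Rightarrow> real) \<Rightarrow> bool" where
  "leading_eigenpairs T \<kappa> m lam xi \<longleftrightarrow>
     (\<forall>i\<in>{1..m}. eigenpair T \<kappa> (lam i) (xi i)) \<and>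
     (\<forall>i\<in>{1..m}. \<forall>j\<in>{1..m}. ipT T (xi i) (xi j) = (if i = j then 1 else 0)) \<and>
     (\<forall>i j. 1 \<le> i \<longrightarrow> i \<le> j \<longrightarrow> j \<le> m \<longrightarrow> lam j \<le> lam i) \<and>
     (\<forall>\<mu> f. eigenpair T \<kappa> \<mu> f \<and> (\<forall>i\<in>{1..m}. ipT T f (xi i) = 0) \<longrightarrow> \<mu> \<le> lam m)"

definition fmd2 :: "real set \<Rightarrow> nat \<Rightarrow> (nat \<Rightarrow> real) \<Rightarrow> (nat \<Rightarrow> real \<Rightarrow> real)
    \<Rightarrow> (real \<Rightarrow> real) \<Rightarrow> (real \<Rightarrow> real) \<Rightarrow> real" where
  "fmd2 T m lam xi Y \<mu> = (\<Sum>i=1..m. (ipT T (\<lambda>t. Y t - \<mu> t) (xi i))^2 / lam i)"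

definition Xhat :: "(nat \<Rightarrow> real set) \<Rightarrow> nat set \<Rightarrow> (real \<Rightarrow> real) \<Rightarrow> (real \<Rightarrow> real) \<Rightarrow> real \<Rightarrow> real" where
  "Xhat P R X \<mu> t = (if t \<in> (\<Union>b\<in>R. P b) then X t else \<mu> t)"

definition theta :: "real set \<Rightarrow> (nat \<Rightarrow> real set) \<Rightarrow> nat \<Rightarrow> nat \<Rightarrow> nat \<Rightarrow> (nat \<Rightarrow> real)
    \<Rightarrow> (nat \<Rightarrow> real \<Rightarrow> real) \<Rightarrow> (real \<Rightarrow> real) \<Rightarrow> (real \<Rightarrow> real) \<Rightarrow> real" where
  "theta T P d a m lam xi X \<mu> =
     (\<Sum>R\<in>Pow ({1..d} - {a}).
        (fact (card R) * fact (d - card R - 1) / fact d) *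
        (fmd2 T m lam xi (Xhat P (insert a R) X \<mu>) \<mu> - fmd2 T m lam xi (Xhat P R X \<mu>) \<mu>))"

definition pos_def_mat :: "real^'n^'n \<Rightarrow> bool" where
  "pos_def_mat S \<longleftrightarrow> (\<forall>x. x \<noteq> 0 \<longrightarrow> x \<bullet> (S *v x) > 0)"

definition gram :: "real set \<Rightarrow> (real \<Rightarrow> real^'n) \<Rightarrow> real^'n^'n" where
  "gram A \<phi> = (\<chi> i j. integral\<^sup>L (lebesgue_on A) (\<lambda>t. \<phi> t $ i * \<phi> t $ j))"

end

theory Submission
  imports Defs
begin

(* Write c = a - m_a, so that X - mu = c' phi and the partially replaced curve minus mu is
   indicator(U_R) * c' phi, where U_R is the union of the pieces in R.  The kernel
   phi(s)' Sigma phi(t) has finite rank: an eigenfunction with eigenvalue lambda <> 0 equals b' phi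
   with Sigma W b = lambda b, the m leading eigenvalues are nonzero, and the coordinate vectors b_i
   are W-orthonormal.  Expanding in this basis gives fmd^2(Y, mu) = u' Sigma^-1 u with
   u = W^-1 (integral of phi (Y - mu)); for the replaced curves u = sum of v_p over p in R, with
   v_p = W^-1 W_{T_p} c.  So the game is a quadratic form of an additive game, whose Shapley value
   is v_a' Sigma^-1 (sum of all v_p) = v_a' Sigma^-1 c: the Shapley weights sum to 1, and the
   coalitions containing a fixed other player carry exactly half of the weight. *)

section \<open>Symmetric matrices and generalized eigenvectors\<close>

lemma inner_symmetric_matrix:
  fixes A :: "real^'n^'n"
  assumes "transpose A = A"
  shows "x \<bullet> (A *v y) = (A *v x) \<bullet> y"
  by (metis assms dot_lmul_matrix transpose_matrix_vector)

lemma transpose_matrix_mul_symmetric: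
  fixes A B :: "real^'n^'n"
  assumes "transpose A = A" "transpose B = B"
  shows "transpose (A ** B ** A) = A ** B ** A"
  by (simp add: assms matrix_transpose_mul matrix_mul_assoc)

lemma
  fixes A :: "real^'n^'n"
  assumes "invertible A"
  shows matrix_inv_right: "A ** matrix_inv A = mat 1"
    and matrix_inv_left: "matrix_inv A ** A = mat 1"
proof -
  have "\<exists>A'. A ** A' = mat 1 \<and> A' ** A = mat 1"
    using assms unfolding invertible_def by blast
  then have "A ** matrix_inv A = mat 1 \<and> matrix_inv A ** A = mat 1"
    unfolding matrix_inv_def by (rule someI_ex)
  then show "A ** matrix_inv A = mat 1" "matrix_inv A ** A = mat 1" by auto
qed

lemma
  fixes A :: "real^'n^'n"
  assumes "invertible A"
  shows matrix_inv_cancel_left: "A *v (matrix_inv A *v x) = x"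
    and matrix_cancel_inv_left: "matrix_inv A *v (A *v x) = x"
  by (simp_all add: matrix_vector_mul_assoc matrix_inv_left matrix_inv_right assms)

lemma sum_matrix_vector_mult:
  fixes A :: "'i \<Rightarrow> real^'n^'m"
  shows "(\<Sum>i\<in>I. A i) *v x = (\<Sum>i\<in>I. A i *v x)"
  by (induction I rule: infinite_finite_induct) (simp_all add: matrix_vector_mult_add_rdistrib)

lemma transpose_matrix_inv_symmetric:
  fixes A :: "real^'n^'n"
  assumes "transpose A = A" "invertible A"
  shows "transpose (matrix_inv A) = matrix_inv A"
proof -
  have left_inv: "transpose (matrix_inv A) ** A = mat 1"
    by (metis assms matrix_inv_right matrix_transpose_mul transpose_mat)
  have "transpose (matrix_inv A) = transpose (matrix_inv A) ** (A ** matrix_inv A)"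
    by (simp add: matrix_inv_right assms)
  also have "\<dots> = matrix_inv A"
    by (simp add: matrix_mul_assoc left_inv)
  finally show ?thesis .
qed

lemma pos_def_mat_eq_0:
  fixes A :: "real^'n^'n"
  assumes "pos_def_mat A" "x \<bullet> (A *v x) = 0"
  shows "x = 0"
  using assms unfolding pos_def_mat_def by force

lemma pos_def_mat_invertible:
  fixes A :: "real^'n^'n"
  assumes "pos_def_mat A"
  shows "invertible A"
proof -
  have "\<forall>x. A *v x = 0 \<longrightarrow> x = 0"
    using pos_def_mat_eq_0[OF assms] by simp
  then show ?thesis
    using matrix_left_invertible_ker invertible_left_inverse by blast
qed

lemma biorthogonal_span_UNIV:
  fixes b g :: "'i \<Rightarrow> real^'n"
  assumes I: "finite I" "card I = CARD('n)"
    and biorth: "\<And>i j. i \<in> I \<Longrightarrow> j \<in> I \<Longrightarrow> g i \<bullet> b j = (if i = j then 1 else 0)"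
  shows "span (g ` I) = UNIV"
proof -
  have inj: "inj_on g I"
  proof (rule inj_onI)
    fix i j assume "i \<in> I" "j \<in> I" "g i = g j"
    then have "g j \<bullet> b i = 1" using biorth[of i i] by simp
    then show "i = j" using biorth[of j i] \<open>i \<in> I\<close> \<open>j \<in> I\<close> by (simp split: if_splits)
  qed
  have "independent (g ` I)"
  proof
    assume "dependent (g ` I)"
    then obtain u where u: "\<exists>v\<in>g ` I. u v \<noteq> 0" "(\<Sum>v\<in>g ` I. u v *\<^sub>R v) = 0"
      unfolding dependent_finite[OF finite_imageI[OF I(1)]] by blast
    have "u (g j) = 0" if "j \<in> I" for j
    proof -
      have "0 = (\<Sum>i\<in>I. u (g i) *\<^sub>R g i) \<bullet> b j"
        using u(2) sum.reindex[OF inj, of "\<lambda>v. u v *\<^sub>R v"] by simp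
      also have "\<dots> = (\<Sum>i\<in>I. if i = j then u (g i) else 0)"
        unfolding inner_sum_left using that by (intro sum.cong) (simp_all add: biorth)
      also have "\<dots> = u (g j)" using that I(1) by simp
      finally show ?thesis by simp
    qed
    with u(1) show False by blast
  qed
  moreover have "dim (UNIV :: (real^'n) set) \<le> card (g ` I)"
    using card_image[OF inj] I(2) by simp
  ultimately show ?thesis
    using card_ge_dim_independent[of "g ` I" UNIV] by blast
qed

lemma biorthogonal_expansion:
  fixes b g :: "'i \<Rightarrow> real^'n"
  assumes I: "finite I" "card I = CARD('n)"
    and biorth: "\<And>i j. i \<in> I \<Longrightarrow> j \<in> I \<Longrightarrow> g i \<bullet> b j = (if i = j then 1 else 0)"
  shows "v = (\<Sum>i\<in>I. (g i \<bullet> v) *\<^sub>R b i)"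
proof -
  define w where "w = v - (\<Sum>i\<in>I. (g i \<bullet> v) *\<^sub>R b i)"
  have "orthogonal w (g j)" if "j \<in> I" for j
  proof -
    have "g j \<bullet> (\<Sum>i\<in>I. (g i \<bullet> v) *\<^sub>R b i) = (\<Sum>i\<in>I. if j = i then g i \<bullet> v else 0)"
      unfolding inner_sum_right using that by (intro sum.cong) (simp_all add: biorth)
    then show ?thesis using that I(1) by (simp add: orthogonal_def w_def inner_diff_right inner_commute)
  qed
  then have "orthogonal w w"
    using orthogonal_to_span[of w "g ` I" w] biorthogonal_span_UNIV[OF I biorth] by blast
  then show ?thesis unfolding w_def orthogonal_def by simp
qed

lemma degenerate_family_orthogonal_exists:
  fixes g :: "'i \<Rightarrow> real^'n"
  assumes I: "finite I" "card I \<le> CARD('n)" and j: "j \<in> I" "g j = 0"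
  obtains x where "x \<noteq> 0" "\<And>i. i \<in> I \<Longrightarrow> g i \<bullet> x = 0"
proof -
  have "g i \<in> span (g ` (I - {j}))" if "i \<in> I" for i
    using that j(2) by (cases "i = j") (simp_all add: span_zero span_base)
  then have "g ` I \<subseteq> span (g ` (I - {j}))" by blast
  then have "dim (g ` I) \<le> card (g ` (I - {j}))"
    using I(1) by (intro dim_le_card) simp_all
  also have "\<dots> \<le> card (I - {j})"
    using I(1) by (intro card_image_le) simp
  also have "\<dots> < CARD('n)"
    using I j(1) card_Diff1_less[OF I(1) j(1)] by simp
  finally obtain x where x: "x \<noteq> 0" "\<And>y. y \<in> span (g ` I) \<Longrightarrow> orthogonal x y"
    using orthogonal_to_subspace_exists[of "g ` I"] by auto
  have "g i \<bullet> x = 0" if "i \<in> I" for i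
    using x(2)[of "g i"] that by (simp add: orthogonal_def inner_commute span_base)
  with x(1) show thesis by (rule that)
qed

lemma linear_plus_quadratic_nonpos_imp_eq_0:
  fixes B C :: real
  assumes "\<And>t. 2 * t * B + t\<^sup>2 * C \<le> 0"
  shows "B = 0"
proof (rule ccontr)
  assume "B \<noteq> 0"
  define s where "s = \<bar>C\<bar> + 1"
  have "s > 0" unfolding s_def by simp
  have "2 * (B / s) * B + (B / s)\<^sup>2 * C = B\<^sup>2 * (2 * s + C) / s\<^sup>2"
    using \<open>s > 0\<close> by (simp add: field_simps power2_eq_square)
  moreover have "B\<^sup>2 * (2 * s + C) / s\<^sup>2 > 0"
    using \<open>B \<noteq> 0\<close> \<open>s > 0\<close> unfolding s_def by (intro divide_pos_pos mult_pos_pos) (auto simp: abs_if)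
  ultimately show False using assms[of "B / s"] by linarith
qed

lemma generalized_rayleigh_quotient_attains_max:
  fixes B W :: "real^'n^'n"
  assumes W: "pos_def_mat W" and V: "subspace V" "V \<noteq> {0}"
  obtains x M where "x \<in> V" "x \<noteq> 0" "x \<bullet> (B *v x) = M * (x \<bullet> (W *v x))"
    and "\<And>y. y \<in> V \<Longrightarrow> y \<bullet> (B *v y) \<le> M * (y \<bullet> (W *v y))"
proof -
  define R where "R y = (y \<bullet> (B *v y)) / (y \<bullet> (W *v y))" for y
  define K where "K = V \<inter> sphere 0 1"
  have W_pos: "y \<bullet> (W *v y) > 0" if "y \<noteq> 0" for y
    using W that unfolding pos_def_mat_def by blast
  have R_scale: "R (r *\<^sub>R y) = R y" if "r \<noteq> 0" for r y
    using that by (simp add: R_def matrix_vector_mult_scaleR)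
  have normalize: "(1 / norm y) *\<^sub>R y \<in> K" if "y \<in> V" "y \<noteq> 0" for y
    using that V(1) unfolding K_def by (simp add: subspace_scale)
  obtain y where "y \<in> V" "y \<noteq> 0"
    using V subspace_0[OF V(1)] by blast
  then have "K \<noteq> {}" using normalize by blast
  moreover have "compact K"
    unfolding K_def using closed_subspace[OF V(1)] by (intro closed_Int_compact) auto
  moreover have "continuous_on K R"
  proof -
    have "y \<bullet> (W *v y) \<noteq> 0" if "y \<in> K" for y
      using that W_pos[of y] unfolding K_def by fastforce
    then show ?thesis
      unfolding R_def by (intro continuous_intros matrix_vector_mult_linear_continuous_on) auto
  qed
  ultimately obtain x where x: "x \<in> K" "\<And>y. y \<in> K \<Longrightarrow> R y \<le> R x"
    using continuous_attains_sup[of K R] by blast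
  show thesis
  proof
    show "x \<in> V" "x \<noteq> 0" using x(1) unfolding K_def by auto
    then show "x \<bullet> (B *v x) = R x * (x \<bullet> (W *v x))"
      using W_pos[of x] by (simp add: R_def)
    fix y assume "y \<in> V"
    show "y \<bullet> (B *v y) \<le> R x * (y \<bullet> (W *v y))"
    proof (cases "y = 0")
      case False
      then have "R y \<le> R x"
        using x(2)[OF normalize[OF \<open>y \<in> V\<close>]] R_scale[of "1 / norm y" y] by simp
      then show ?thesis using W_pos[OF False] unfolding R_def by (simp add: divide_le_eq)
    qed simp
  qed
qed

lemma quadratic_form_add_scaleR:
  fixes A :: "real^'n^'n"
  assumes "transpose A = A"
  shows "(x + t *\<^sub>R y) \<bullet> (A *v (x + t *\<^sub>R y))
       = x \<bullet> (A *v x) + 2 * t * (y \<bullet> (A *v x)) + t\<^sup>2 * (y \<bullet> (A *v y))"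
proof -
  have "x \<bullet> (A *v y) = y \<bullet> (A *v x)"
    by (metis inner_commute inner_symmetric_matrix[OF assms])
  then show ?thesis
    by (simp add: matrix_vector_right_distrib matrix_vector_mult_scaleR inner_add_left
        inner_add_right power2_eq_square algebra_simps)
qed

lemma generalized_rayleigh_max_stationary:
  fixes B W :: "real^'n^'n"
  assumes B: "transpose B = B" and W: "transpose W = W" and V: "subspace V" "x \<in> V" "y \<in> V"
    and max: "\<And>z. z \<in> V \<Longrightarrow> z \<bullet> (B *v z) \<le> M * (z \<bullet> (W *v z))"
    and x: "x \<bullet> (B *v x) = M * (x \<bullet> (W *v x))" and y: "y \<bullet> (W *v x) = 0"
  shows "y \<bullet> (B *v x) = 0"
proof (rule linear_plus_quadratic_nonpos_imp_eq_0)
  fix t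
  have "x + t *\<^sub>R y \<in> V" using V by (simp add: subspace_add subspace_scale)
  from max[OF this] show "2 * t * (y \<bullet> (B *v x)) + t\<^sup>2 * (y \<bullet> (B *v y) - M * (y \<bullet> (W *v y))) \<le> 0"
    unfolding quadratic_form_add_scaleR[OF B] quadratic_form_add_scaleR[OF W] x y
    by (simp add: algebra_simps)
qed

text \<open>The maximiser of \<open>x' W S W x / x' W x\<close> over \<open>V\<close> is the eigenvector.\<close>
lemma symmetric_pencil_eigenvector_in_invariant_subspace:
  fixes S W :: "real^'n^'n"
  assumes S: "transpose S = S" and W: "transpose W = W" "pos_def_mat W"
    and V: "subspace V" "V \<noteq> {0}" and invariant: "\<And>x. x \<in> V \<Longrightarrow> S *v (W *v x) \<in> V"
  obtains x M where "x \<in> V" "x \<noteq> 0" "S *v (W *v x) = M *\<^sub>R x"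
proof -
  define B where "B = W ** S ** W"
  obtain x M where x: "x \<in> V" "x \<noteq> 0" "x \<bullet> (B *v x) = M * (x \<bullet> (W *v x))"
    and max: "\<And>y. y \<in> V \<Longrightarrow> y \<bullet> (B *v y) \<le> M * (y \<bullet> (W *v y))"
    using generalized_rayleigh_quotient_attains_max[OF W(2) V, of B] by blast
  have B_sym: "transpose B = B"
    unfolding B_def by (rule transpose_matrix_mul_symmetric[OF W(1) S])
  have B_apply: "y \<bullet> (B *v u) = (W *v y) \<bullet> (S *v (W *v u))" for y u
    unfolding B_def matrix_vector_mul_assoc[symmetric] by (rule inner_symmetric_matrix[OF W(1)])
  define z where "z = S *v (W *v x) - M *\<^sub>R x"
  have "z \<in> V" unfolding z_def using V(1) x(1) invariant by (simp add: subspace_diff subspace_scale)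
  moreover have z_W_x: "z \<bullet> (W *v x) = 0"
    using x(3) by (simp add: z_def inner_diff_left inner_diff_right B_apply inner_commute)
  ultimately have "z \<bullet> (B *v x) = 0"
    using generalized_rayleigh_max_stationary[OF B_sym W(1) V(1) x(1) _ max x(3)] by blast
  then have "z \<bullet> (W *v z) = 0"
  proof -
    have "z \<bullet> (W *v z) = (W *v z) \<bullet> (S *v (W *v x)) - M * ((W *v z) \<bullet> x)"
      unfolding inner_symmetric_matrix[OF W(1), of z z] by (simp add: z_def inner_diff_right)
    also have "\<dots> = z \<bullet> (B *v x) - M * (z \<bullet> (W *v x))"
      by (simp add: B_apply inner_symmetric_matrix[OF W(1), of z x])
    finally show ?thesis using \<open>z \<bullet> (B *v x) = 0\<close> z_W_x by simp
  qed
  then have "z = 0" by (rule pos_def_mat_eq_0[OF W(2)])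
  then show thesis using that x(1,2) unfolding z_def by simp
qed

section \<open>Shapley values of quadratic games\<close>

definition shapley_weight :: "nat \<Rightarrow> nat \<Rightarrow> real" where
  "shapley_weight d k = fact k * fact (d - k - 1) / fact d"

definition shapley_value :: "'a set \<Rightarrow> 'a \<Rightarrow> ('a set \<Rightarrow> real) \<Rightarrow> real" where
  "shapley_value D a v =
     (\<Sum>R\<in>Pow (D - {a}). shapley_weight (card D) (card R) * (v (insert a R) - v R))"

lemma shapley_value_cong:
  assumes "a \<in> D" "\<And>R. R \<subseteq> D \<Longrightarrow> v R = v' R"
  shows "shapley_value D a v = shapley_value D a v'"
  unfolding shapley_value_def
proof (intro sum.cong refl)
  fix R assume "R \<in> Pow (D - {a})"
  then have "R \<subseteq> D" "insert a R \<subseteq> D" using assms(1) by auto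
  then show "shapley_weight (card D) (card R) * (v (insert a R) - v R)
      = shapley_weight (card D) (card R) * (v' (insert a R) - v' R)"
    using assms(2) by simp
qed

lemma sum_Pow_card:
  fixes f :: "nat \<Rightarrow> real"
  assumes "finite S"
  shows "(\<Sum>R\<in>Pow S. f (card R)) = (\<Sum>k\<le>card S. of_nat (card S choose k) * f k)"
proof -
  have "(\<Sum>R\<in>Pow S. f (card R)) = (\<Sum>k\<le>card S. \<Sum>R\<in>{R\<in>Pow S. card R = k}. f (card R))"
    by (rule sum.group[symmetric]) (use assms card_mono in auto)
  also have "\<dots> = (\<Sum>k\<le>card S. of_nat (card S choose k) * f k)"
  proof (rule sum.cong[OF refl])
    fix k
    have "{R\<in>Pow S. card R = k} = {R. R \<subseteq> S \<and> card R = k}" by auto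
    then show "(\<Sum>R\<in>{R\<in>Pow S. card R = k}. f (card R)) = of_nat (card S choose k) * f k"
      using n_subsets[OF assms] by simp
  qed
  finally show ?thesis .
qed

lemma sum_shapley_weight:
  assumes "finite D" "a \<in> D"
  shows "(\<Sum>R\<in>Pow (D - {a}). shapley_weight (card D) (card R)) = 1"
proof -
  define d where "d = card D"
  have d: "d \<ge> 1" "card (D - {a}) = d - 1"
    using assms card_0_eq unfolding d_def by fastforce+
  have "(\<Sum>R\<in>Pow (D - {a}). shapley_weight d (card R))
      = (\<Sum>k\<le>d - 1. of_nat (d - 1 choose k) * shapley_weight d k)"
    using sum_Pow_card[of "D - {a}"] assms(1) d(2) by simp
  also have "\<dots> = (\<Sum>k\<le>d - 1. 1 / of_nat d)"
  proof (rule sum.cong[OF refl])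
    fix k assume "k \<in> {..d - 1}"
    then have "fact k * fact (d - 1 - k) * of_nat (d - 1 choose k) = (fact (d - 1) :: real)"
      by (metis atMost_iff binomial_fact_lemma of_nat_fact of_nat_mult)
    moreover have "(fact d :: real) = of_nat d * fact (d - 1)"
      using d(1) by (metis fact_nonzero fact_num_eq_if of_nat_fact not_one_le_zero)
    moreover have "d - k - 1 = d - 1 - k" by simp
    ultimately show "of_nat (d - 1 choose k) * shapley_weight d k = 1 / of_nat d"
      unfolding shapley_weight_def by (simp add: field_simps)
  qed
  also have "\<dots> = 1" using d(1) by simp
  finally show ?thesis unfolding d_def .
qed

text \<open>Complementation in \<open>D - {a}\<close> preserves the weights and swaps the coalitions that
  contain \<open>b\<close> with those that do not.\<close>
lemma sum_shapley_weight_mem: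
  assumes "finite D" "a \<in> D" "b \<in> D - {a}"
  shows "(\<Sum>R\<in>{R\<in>Pow (D - {a}). b \<in> R}. shapley_weight (card D) (card R)) = 1 / 2"
proof -
  define S where "S = D - {a}"
  define w where "w R = shapley_weight (card D) (card R)" for R :: "'a set"
  have S: "finite S" "card S = card D - 1" "b \<in> S"
    using assms unfolding S_def by auto
  have w_compl: "w (S - R) = w R" if "R \<subseteq> S" for R
  proof -
    have "card (S - R) = card S - card R" "card R \<le> card S"
      using that S(1) by (auto simp: card_Diff_subset finite_subset card_mono)
    then have "card D - card (S - R) - 1 = card R" "card D - card R - 1 = card (S - R)"
      using S(2) by linarith+
    then show ?thesis unfolding w_def shapley_weight_def by (simp add: mult.commute)
  qed
  have "bij_betw (\<lambda>R. S - R) {R\<in>Pow S. b \<in> R} {R\<in>Pow S. b \<notin> R}"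
    by (rule bij_betw_byWitness[where f' = "\<lambda>R. S - R"]) (use S(3) in auto)
  then have "(\<Sum>R\<in>{R\<in>Pow S. b \<notin> R}. w R) = (\<Sum>R\<in>{R\<in>Pow S. b \<in> R}. w (S - R))"
    by (rule sum.reindex_bij_betw[symmetric])
  also have "\<dots> = (\<Sum>R\<in>{R\<in>Pow S. b \<in> R}. w R)"
    using w_compl by (intro sum.cong) auto
  finally have halves: "(\<Sum>R\<in>{R\<in>Pow S. b \<notin> R}. w R) = (\<Sum>R\<in>{R\<in>Pow S. b \<in> R}. w R)" .
  have "(\<Sum>R\<in>Pow S. w R) = (\<Sum>R\<in>{R\<in>Pow S. b \<in> R} \<union> {R\<in>Pow S. b \<notin> R}. w R)"
    by (rule sum.cong) auto
  also have "\<dots> = (\<Sum>R\<in>{R\<in>Pow S. b \<in> R}. w R) + (\<Sum>R\<in>{R\<in>Pow S. b \<notin> R}. w R)"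
    using S(1) by (intro sum.union_disjoint) auto
  finally have "(\<Sum>R\<in>Pow S. w R) = 2 * (\<Sum>R\<in>{R\<in>Pow S. b \<in> R}. w R)"
    using halves by simp
  moreover have "(\<Sum>R\<in>Pow S. w R) = 1"
    using sum_shapley_weight[OF assms(1,2)] unfolding S_def w_def .
  ultimately show ?thesis unfolding S_def w_def by simp
qed

lemma sum_shapley_weight_scaleR_sum:
  fixes v :: "'a \<Rightarrow> 'b::real_vector"
  assumes "finite D" "a \<in> D"
  shows "(\<Sum>R\<in>Pow (D - {a}). shapley_weight (card D) (card R) *\<^sub>R (\<Sum>p\<in>R. v p))
       = (1 / 2) *\<^sub>R (\<Sum>p\<in>D - {a}. v p)"
proof -
  define S where "S = D - {a}"
  have S: "finite S" using assms(1) unfolding S_def by simp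
  have "(\<Sum>R\<in>Pow S. shapley_weight (card D) (card R) *\<^sub>R (\<Sum>p\<in>R. v p))
      = (\<Sum>R\<in>Pow S. \<Sum>p\<in>{p\<in>S. p \<in> R}. shapley_weight (card D) (card R) *\<^sub>R v p)"
    by (intro sum.cong) (auto simp: scaleR_sum_right intro: sum.cong)
  also have "\<dots> = (\<Sum>p\<in>S. (\<Sum>R\<in>{R\<in>Pow S. p \<in> R}. shapley_weight (card D) (card R)) *\<^sub>R v p)"
    using S by (simp add: sum.swap_restrict scaleR_sum_left)
  also have "\<dots> = (\<Sum>p\<in>S. (1 / 2) *\<^sub>R v p)"
    using sum_shapley_weight_mem[OF assms] unfolding S_def by (intro sum.cong) auto
  finally show ?thesis unfolding S_def by (simp add: scaleR_sum_right)
qed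

lemma shapley_value_quadratic_form:
  fixes S :: "real^'n^'n" and v :: "'a \<Rightarrow> real^'n"
  assumes "finite D" "a \<in> D" "transpose S = S"
  shows "shapley_value D a (\<lambda>R. (\<Sum>p\<in>R. v p) \<bullet> (S *v (\<Sum>p\<in>R. v p)))
       = v a \<bullet> (S *v (\<Sum>p\<in>D. v p))"
proof -
  define Q where "Q u = u \<bullet> (S *v u)" for u
  define w where "w R = shapley_weight (card D) (card R)" for R :: "'a set"
  have marginal: "Q (\<Sum>p\<in>insert a R. v p) - Q (\<Sum>p\<in>R. v p) = Q (v a) + 2 * (v a \<bullet> (S *v (\<Sum>p\<in>R. v p)))"
    if "R \<in> Pow (D - {a})" for R
  proof -
    have "finite R" "a \<notin> R" using that assms(1) by (auto intro: finite_subset)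
    then have "(\<Sum>p\<in>insert a R. v p) = v a + (\<Sum>p\<in>R. v p)" by simp
    moreover have "(\<Sum>p\<in>R. v p) \<bullet> (S *v v a) = v a \<bullet> (S *v (\<Sum>p\<in>R. v p))"
      using inner_symmetric_matrix[OF assms(3)] by (simp add: inner_commute)
    ultimately show ?thesis
      unfolding Q_def by (simp add: matrix_vector_right_distrib inner_add_left inner_add_right)
  qed
  have "shapley_value D a (\<lambda>R. Q (\<Sum>p\<in>R. v p))
      = (\<Sum>R\<in>Pow (D - {a}). w R * Q (v a) + 2 * (v a \<bullet> (S *v (w R *\<^sub>R (\<Sum>p\<in>R. v p)))))"
    unfolding shapley_value_def w_def using marginal
    by (intro sum.cong) (simp_all add: matrix_vector_mult_scaleR distrib_left)
  also have "\<dots> = (\<Sum>R\<in>Pow (D - {a}). w R) * Q (v a)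
      + 2 * (v a \<bullet> (S *v (\<Sum>R\<in>Pow (D - {a}). w R *\<^sub>R (\<Sum>p\<in>R. v p))))"
    by (simp add: sum.distrib sum_distrib_left sum_distrib_right inner_sum_right vec.sum)
  also have "\<dots> = Q (v a) + v a \<bullet> (S *v (\<Sum>p\<in>D - {a}. v p))"
    using sum_shapley_weight[OF assms(1,2)] sum_shapley_weight_scaleR_sum[OF assms(1,2), of v]
    unfolding w_def by (simp add: matrix_vector_mult_scaleR)
  also have "\<dots> = v a \<bullet> (S *v (\<Sum>p\<in>D. v p))"
    using assms(1,2) unfolding Q_def
    by (simp add: sum.remove[of D a] matrix_vector_right_distrib inner_add_right)
  finally show ?thesis unfolding Q_def .
qed

section \<open>Integrals against a finite family of functions\<close>

lemma is_interval_sets_lebesgue: "is_interval (S :: real set) \<Longrightarrow> S \<in> sets lebesgue"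
  using real_interval_borel_measurable sets_completionI_sets sets_lborel by metis

lemma L2_on_mult_integrable:
  assumes "L2_on T f" "L2_on T g"
  shows "integrable (lebesgue_on T) (\<lambda>t. f t * g t)"
proof (rule Bochner_Integration.integrable_bound)
  show "integrable (lebesgue_on T) (\<lambda>t. (f t)\<^sup>2 + (g t)\<^sup>2)"
    using assms unfolding L2_on_def by auto
  show "(\<lambda>t. f t * g t) \<in> borel_measurable (lebesgue_on T)"
    using assms unfolding L2_on_def by auto
  have "\<bar>f t * g t\<bar> \<le> (f t)\<^sup>2 + (g t)\<^sup>2" for t
  proof -
    have "2 * \<bar>f t\<bar> * \<bar>g t\<bar> \<le> (f t)\<^sup>2 + (g t)\<^sup>2"
      using sum_squares_bound[of "\<bar>f t\<bar>" "\<bar>g t\<bar>"] by simp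
    moreover have "0 \<le> \<bar>f t\<bar> * \<bar>g t\<bar>" by simp
    ultimately show ?thesis unfolding abs_mult by linarith
  qed
  then show "AE t in lebesgue_on T. norm (f t * g t) \<le> norm ((f t)\<^sup>2 + (g t)\<^sup>2)"
    by simp
qed

lemma integrable_lebesgue_on_mult_indicator:
  fixes h :: "real \<Rightarrow> real"
  assumes "S \<subseteq> T" "S \<in> sets lebesgue" "T \<in> sets lebesgue" "integrable (lebesgue_on T) h"
  shows "integrable (lebesgue_on T) (\<lambda>t. indicator S t * h t)"
proof -
  have "S \<in> sets (lebesgue_on T)"
    using assms(1-3) by (simp add: sets_restrict_space_iff Int_absorb2)
  then show ?thesis using integrable_mult_indicator[OF _ assms(4)] by simp
qed

lemma
  fixes S T :: "real set" and h :: "real \<Rightarrow> real"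
  assumes "S \<subseteq> T" "S \<in> sets lebesgue" "T \<in> sets lebesgue"
  shows integrable_lebesgue_on_subset:
      "integrable (lebesgue_on T) h \<Longrightarrow> integrable (lebesgue_on S) h"
    and integral_lebesgue_on_subset:
      "integral\<^sup>L (lebesgue_on S) h = (\<integral>t. indicator S t * h t \<partial>lebesgue_on T)"
proof -
  have indicator_S: "(\<lambda>t. indicator T t * (indicator S t * h t)) = (\<lambda>t. indicator S t * h t)"
    using assms(1) by (intro ext) (auto simp: indicator_def)
  show "integrable (lebesgue_on S) h" if "integrable (lebesgue_on T) h"
  proof -
    have "integrable (lebesgue_on T) (\<lambda>t. indicator S t * h t)"
      using integrable_lebesgue_on_mult_indicator assms that .
    then show ?thesis
      using assms by (simp add: integrable_restrict_space indicator_S)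
  qed
  show "integral\<^sup>L (lebesgue_on S) h = (\<integral>t. indicator S t * h t \<partial>lebesgue_on T)"
    using assms by (simp add: integral_restrict_space indicator_S)
qed

lemma integral_indicator_disjoint_UN:
  fixes T :: "real set" and h :: "real \<Rightarrow> real"
  assumes "finite R" "disjoint_family_on P R" "T \<in> sets lebesgue"
    and "\<And>p. p \<in> R \<Longrightarrow> P p \<subseteq> T \<and> P p \<in> sets lebesgue"
    and h: "integrable (lebesgue_on T) h"
  shows "(\<integral>t. indicator (\<Union>p\<in>R. P p) t * h t \<partial>lebesgue_on T)
       = (\<Sum>p\<in>R. integral\<^sup>L (lebesgue_on (P p)) h)"
proof -
  have "(\<integral>t. indicator (\<Union>p\<in>R. P p) t * h t \<partial>lebesgue_on T)
      = (\<integral>t. (\<Sum>p\<in>R. indicator (P p) t * h t) \<partial>lebesgue_on T)"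
    by (simp add: indicator_UN_disjoint[OF assms(1,2)] sum_distrib_right)
  also have "\<dots> = (\<Sum>p\<in>R. \<integral>t. indicator (P p) t * h t \<partial>lebesgue_on T)"
    using assms(3,4) h
    by (intro Bochner_Integration.integral_sum integrable_lebesgue_on_mult_indicator) auto
  also have "\<dots> = (\<Sum>p\<in>R. integral\<^sup>L (lebesgue_on (P p)) h)"
    using assms(3,4) by (intro sum.cong refl integral_lebesgue_on_subset[symmetric]) auto
  finally show ?thesis .
qed

lemma L2_on_subset:
  assumes "S \<subseteq> T" "S \<in> sets lebesgue" "T \<in> sets lebesgue" "L2_on T f"
  shows "L2_on S f"
  using assms measurable_restrict_mono integrable_lebesgue_on_subset unfolding L2_on_def by blast

lemma L2_on_mult_indicator:
  assumes "S \<subseteq> T" "S \<in> sets lebesgue" "T \<in> sets lebesgue" "L2_on T f"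
  shows "L2_on T (\<lambda>t. indicator S t * f t)"
proof -
  have "S \<in> sets (lebesgue_on T)"
    using assms(1-3) by (simp add: sets_restrict_space_iff Int_absorb2)
  then have "(\<lambda>t. indicator S t * f t) \<in> borel_measurable (lebesgue_on T)"
    using assms(4) unfolding L2_on_def by (intro borel_measurable_times borel_measurable_indicator) auto
  moreover have "integrable (lebesgue_on T) (\<lambda>t. indicator S t * (f t)\<^sup>2)"
    using assms unfolding L2_on_def by (intro integrable_lebesgue_on_mult_indicator) auto
  moreover have "(\<lambda>t. (indicator S t * f t)\<^sup>2) = (\<lambda>t. indicator S t * (f t)\<^sup>2)"
    by (intro ext) (simp add: indicator_def)
  ultimately show ?thesis
    unfolding L2_on_def by simp
qed

definition moments :: "'a measure \<Rightarrow> ('a \<Rightarrow> real^'n) \<Rightarrow> ('a \<Rightarrow> real) \<Rightarrow> real^'n" where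
  "moments N \<phi> h = (\<chi> k. \<integral>t. \<phi> t $ k * h t \<partial>N)"

lemma
  fixes \<phi> :: "'a \<Rightarrow> real^'n"
  assumes "\<And>k. integrable N (\<lambda>t. \<phi> t $ k * h t)"
  shows integrable_inner_mult: "integrable N (\<lambda>t. (u \<bullet> \<phi> t) * h t)"
    and integral_inner_mult: "(\<integral>t. (u \<bullet> \<phi> t) * h t \<partial>N) = u \<bullet> moments N \<phi> h"
proof -
  have sum: "(u \<bullet> \<phi> t) * h t = (\<Sum>k\<in>UNIV. u $ k * (\<phi> t $ k * h t))" for t
    by (simp add: inner_vec_def sum_distrib_right mult.assoc)
  show "integrable N (\<lambda>t. (u \<bullet> \<phi> t) * h t)"
    unfolding sum using assms by auto
  show "(\<integral>t. (u \<bullet> \<phi> t) * h t \<partial>N) = u \<bullet> moments N \<phi> h"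
    unfolding sum moments_def using assms by (simp add: inner_vec_def)
qed

lemma moments_cong_AE:
  assumes "\<And>k. integrable N (\<lambda>t. \<phi> t $ k * f t)"
    and "\<And>k. integrable N (\<lambda>t. \<phi> t $ k * g t)"
    and "AE t in N. f t = g t"
  shows "moments N \<phi> f = moments N \<phi> g"
  unfolding moments_def vec_eq_iff
  using assms by (auto intro!: integral_cong_AE)

lemma transpose_gram: "transpose (gram A \<phi>) = gram A \<phi>"
  by (simp add: gram_def transpose_def vec_eq_iff mult.commute)

context
  fixes A :: "real set" and \<phi> :: "real \<Rightarrow> real^'n"
  assumes L2: "\<And>k. L2_on A (\<lambda>t. \<phi> t $ k)"
begin

lemma borel_measurable_inner:
  "(\<lambda>t. u \<bullet> \<phi> t) \<in> borel_measurable (lebesgue_on A)"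
proof -
  have "(\<lambda>t. \<phi> t $ k) \<in> borel_measurable (lebesgue_on A)" for k
    using L2 unfolding L2_on_def by blast
  then show ?thesis
    unfolding inner_vec_def by simp
qed

lemma
  shows integrable_component_mult_inner: "integrable (lebesgue_on A) (\<lambda>t. \<phi> t $ k * (v \<bullet> \<phi> t))"
    and moments_inner_gram: "moments (lebesgue_on A) \<phi> (\<lambda>t. v \<bullet> \<phi> t) = gram A \<phi> *v v"
proof -
  have sum: "\<phi> t $ k * (v \<bullet> \<phi> t) = (\<Sum>j\<in>UNIV. v $ j * (\<phi> t $ k * \<phi> t $ j))" for t k
    by (simp add: inner_vec_def sum_distrib_left mult_ac)
  have int: "integrable (lebesgue_on A) (\<lambda>t. \<phi> t $ k * \<phi> t $ j)" for k j
    using L2_on_mult_integrable[OF L2 L2] .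
  show "integrable (lebesgue_on A) (\<lambda>t. \<phi> t $ k * (v \<bullet> \<phi> t))"
    unfolding sum using int by auto
  show "moments (lebesgue_on A) \<phi> (\<lambda>t. v \<bullet> \<phi> t) = gram A \<phi> *v v"
    unfolding moments_def gram_def sum using int
    by (simp add: vec_eq_iff matrix_vector_mult_def mult_ac)
qed

lemma
  shows integrable_inner_inner: "integrable (lebesgue_on A) (\<lambda>t. (u \<bullet> \<phi> t) * (v \<bullet> \<phi> t))"
    and integral_inner_inner_gram: "(\<integral>t. (u \<bullet> \<phi> t) * (v \<bullet> \<phi> t) \<partial>lebesgue_on A) = u \<bullet> (gram A \<phi> *v v)"
  using integrable_inner_mult[OF integrable_component_mult_inner]
    integral_inner_mult[OF integrable_component_mult_inner] moments_inner_gram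
  by simp_all

lemma L2_on_inner: "L2_on A (\<lambda>t. u \<bullet> \<phi> t)"
  unfolding L2_on_def power2_eq_square using borel_measurable_inner integrable_inner_inner by blast

lemma pos_def_mat_gram:
  assumes indep: "\<And>c. (AE t in lebesgue_on A. c \<bullet> \<phi> t = 0) \<Longrightarrow> c = 0"
  shows "pos_def_mat (gram A \<phi>)"
  unfolding pos_def_mat_def
proof (intro allI impI)
  fix x :: "real^'n" assume "x \<noteq> 0"
  then have "\<not> (AE t in lebesgue_on A. (x \<bullet> \<phi> t) * (x \<bullet> \<phi> t) = 0)"
    using indep by force
  moreover have "0 \<le> (\<integral>t. (x \<bullet> \<phi> t) * (x \<bullet> \<phi> t) \<partial>lebesgue_on A)"
    by (intro integral_nonneg_AE) simp
  moreover have "(\<integral>t. (x \<bullet> \<phi> t) * (x \<bullet> \<phi> t) \<partial>lebesgue_on A) = 0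
      \<longleftrightarrow> (AE t in lebesgue_on A. (x \<bullet> \<phi> t) * (x \<bullet> \<phi> t) = 0)"
    by (intro integral_nonneg_eq_0_iff_AE integrable_inner_inner) simp
  ultimately have "0 < (\<integral>t. (x \<bullet> \<phi> t) * (x \<bullet> \<phi> t) \<partial>lebesgue_on A)"
    by linarith
  then show "0 < x \<bullet> (gram A \<phi> *v x)"
    by (simp add: integral_inner_inner_gram)
qed

end

lemma moments_indicator_inner:
  assumes L2: "\<And>k. L2_on A (\<lambda>t. \<phi> t $ k)"
    and "S \<subseteq> A" "S \<in> sets lebesgue" "A \<in> sets lebesgue"
  shows "moments (lebesgue_on A) \<phi> (\<lambda>t. indicator S t * (v \<bullet> \<phi> t)) = gram S \<phi> *v v"
proof -
  have "moments (lebesgue_on A) \<phi> (\<lambda>t. indicator S t * (v \<bullet> \<phi> t))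
      = moments (lebesgue_on S) \<phi> (\<lambda>t. v \<bullet> \<phi> t)"
    unfolding moments_def using integral_lebesgue_on_subset[OF assms(2-4)]
    by (simp add: vec_eq_iff mult.left_commute)
  also have "\<dots> = gram S \<phi> *v v"
    using moments_inner_gram L2_on_subset[OF assms(2-4) L2] by blast
  finally show ?thesis .
qed

lemma gram_disjoint_UN:
  assumes L2: "\<And>k. L2_on A (\<lambda>t. \<phi> t $ k)"
    and "A \<in> sets lebesgue" "finite R" "disjoint_family_on P R"
    and "\<And>p. p \<in> R \<Longrightarrow> P p \<subseteq> A \<and> P p \<in> sets lebesgue"
  shows "gram (\<Union>p\<in>R. P p) \<phi> = (\<Sum>p\<in>R. gram (P p) \<phi>)"
proof -
  have "(\<Union>p\<in>R. P p) \<subseteq> A" "(\<Union>p\<in>R. P p) \<in> sets lebesgue"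
    using assms(3,5) by auto
  then show ?thesis
    unfolding gram_def vec_eq_iff
    using integral_lebesgue_on_subset integral_indicator_disjoint_UN[OF assms(3,4,2,5)]
      L2_on_mult_integrable[OF L2 L2] assms(2)
    by simp
qed

section \<open>The finite-rank covariance kernel\<close>

locale finite_rank_kernel =
  fixes T :: "real set" and \<phi> :: "real \<Rightarrow> real^'n" and \<Sigma> :: "real^'n^'n"
  assumes phi_L2: "\<And>k. L2_on T (\<lambda>t. \<phi> t $ k)"
    and phi_indep: "\<And>c. (AE t in lebesgue_on T. c \<bullet> \<phi> t = 0) \<Longrightarrow> c = 0"
    and Sigma_symmetric: "transpose \<Sigma> = \<Sigma>"
    and Sigma_pos_def: "pos_def_mat \<Sigma>"
    and T_sets: "T \<in> sets lebesgue"
begin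

abbreviation W :: "real^'n^'n" where "W \<equiv> gram T \<phi>"

abbreviation \<kappa> :: "real \<Rightarrow> real \<Rightarrow> real" where "\<kappa> \<equiv> \<lambda>s t. \<phi> s \<bullet> (\<Sigma> *v \<phi> t)"

abbreviation mom :: "(real \<Rightarrow> real) \<Rightarrow> real^'n" where "mom \<equiv> moments (lebesgue_on T) \<phi>"

lemma W_symmetric: "transpose W = W"
  by (rule transpose_gram)

lemma W_pos_def: "pos_def_mat W"
  using pos_def_mat_gram[OF phi_L2 phi_indep] .

lemma mom_inner: "mom (\<lambda>t. v \<bullet> \<phi> t) = W *v v"
  using moments_inner_gram[OF phi_L2] .

lemma intop_kernel:
  assumes "\<And>k. integrable (lebesgue_on T) (\<lambda>t. \<phi> t $ k * f t)"
  shows "intop T \<kappa> f s = \<phi> s \<bullet> (\<Sigma> *v mom f)"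
proof -
  have "intop T \<kappa> f s = (\<integral>t. ((\<Sigma> *v \<phi> s) \<bullet> \<phi> t) * f t \<partial>lebesgue_on T)"
    unfolding intop_def inner_symmetric_matrix[OF Sigma_symmetric] ..
  also have "\<dots> = (\<Sigma> *v \<phi> s) \<bullet> mom f"
    using integral_inner_mult[OF assms] .
  finally show ?thesis
    by (simp add: inner_symmetric_matrix[OF Sigma_symmetric])
qed

lemma
  assumes "eigenpair T \<kappa> \<mu> f"
  shows eigenpair_integrable: "integrable (lebesgue_on T) (\<lambda>t. \<phi> t $ k * f t)"
    and eigenpair_measurable: "f \<in> borel_measurable (lebesgue_on T)"
    and eigenpair_AE: "AE s in lebesgue_on T. \<phi> s \<bullet> (\<Sigma> *v mom f) = \<mu> * f s"
proof -
  show int: "integrable (lebesgue_on T) (\<lambda>t. \<phi> t $ k * f t)" for k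
    using assms phi_L2 L2_on_mult_integrable unfolding eigenpair_def by blast
  show "f \<in> borel_measurable (lebesgue_on T)"
    using assms unfolding eigenpair_def L2_on_def by blast
  show "AE s in lebesgue_on T. \<phi> s \<bullet> (\<Sigma> *v mom f) = \<mu> * f s"
    using assms unfolding eigenpair_def intop_kernel[OF int] by blast
qed

lemma eigenpair_moments_eigenvector:
  assumes "eigenpair T \<kappa> \<mu> f"
  shows "W *v (\<Sigma> *v mom f) = \<mu> *\<^sub>R mom f"
proof -
  have "W *v (\<Sigma> *v mom f) = mom (\<lambda>s. \<phi> s \<bullet> (\<Sigma> *v mom f))"
    using mom_inner[of "\<Sigma> *v mom f"] by (simp only: inner_commute)
  also have "\<dots> = mom (\<lambda>s. \<mu> * f s)"
  proof (rule moments_cong_AE)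
    show "integrable (lebesgue_on T) (\<lambda>t. \<phi> t $ k * (\<phi> t \<bullet> (\<Sigma> *v mom f)))" for k
      using integrable_component_mult_inner[OF phi_L2, of k "\<Sigma> *v mom f"] by (simp only: inner_commute)
    show "integrable (lebesgue_on T) (\<lambda>t. \<phi> t $ k * (\<mu> * f t))" for k
      using integrable_mult_right[OF eigenpair_integrable[OF assms], of \<mu> k]
      by (simp add: mult.left_commute)
  qed (rule eigenpair_AE[OF assms])
  also have "\<dots> = \<mu> *\<^sub>R mom f"
    by (simp add: moments_def vec_eq_iff mult.left_commute)
  finally show ?thesis .
qed

lemma eigenpair_zero_moments:
  assumes "eigenpair T \<kappa> 0 f"
  shows "mom f = 0"
proof -
  have "AE s in lebesgue_on T. (\<Sigma> *v mom f) \<bullet> \<phi> s = 0"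
    using eigenpair_AE[OF assms] by (simp add: inner_commute)
  then have "\<Sigma> *v mom f = 0" by (rule phi_indep)
  then show ?thesis using pos_def_mat_eq_0[OF Sigma_pos_def] by simp
qed

lemma eigenpair_of_eigenvector:
  assumes "x \<noteq> 0" "\<Sigma> *v (W *v x) = M *\<^sub>R x"
  shows "eigenpair T \<kappa> M (\<lambda>t. x \<bullet> \<phi> t)"
  unfolding eigenpair_def
proof (intro conjI)
  show "L2_on T (\<lambda>t. x \<bullet> \<phi> t)" using L2_on_inner[OF phi_L2] .
  show "\<not> (AE t in lebesgue_on T. x \<bullet> \<phi> t = 0)" using phi_indep assms(1) by blast
  have "intop T \<kappa> (\<lambda>t. x \<bullet> \<phi> t) s = M * (x \<bullet> \<phi> s)" for s
    using assms(2) by (simp add: intop_kernel[OF integrable_component_mult_inner[OF phi_L2]]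
        mom_inner inner_commute)
  then show "AE s in lebesgue_on T. intop T \<kappa> (\<lambda>t. x \<bullet> \<phi> t) s = M * (x \<bullet> \<phi> s)" by simp
qed

lemma inner_moments_Sigma_W:
  assumes "eigenpair T \<kappa> \<mu> f"
  shows "mom f \<bullet> (\<Sigma> *v (W *v x)) = \<mu> * (mom f \<bullet> x)"
proof -
  have "mom f \<bullet> (\<Sigma> *v (W *v x)) = (W *v (\<Sigma> *v mom f)) \<bullet> x"
    unfolding inner_symmetric_matrix[OF Sigma_symmetric] inner_symmetric_matrix[OF W_symmetric] ..
  then show ?thesis using eigenpair_moments_eigenvector[OF assms] by simp
qed

lemma eigenvector_eigenvalue_pos:
  assumes "x \<noteq> 0" "\<Sigma> *v (W *v x) = M *\<^sub>R x"
  shows "M > 0"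
proof -
  have "W *v x \<noteq> 0"
    using assms(1) pos_def_mat_eq_0[OF W_pos_def, of x] by auto
  then have "0 < (W *v x) \<bullet> (\<Sigma> *v (W *v x))"
    using Sigma_pos_def unfolding pos_def_mat_def by blast
  also have "\<dots> = M * (x \<bullet> (W *v x))"
    using assms(2) by (simp add: inner_commute)
  finally show ?thesis
    using W_pos_def assms(1) unfolding pos_def_mat_def by (auto simp: zero_less_mult_iff)
qed

lemma leading_eigenpair:
  assumes "leading_eigenpairs T \<kappa> CARD('n) lam xi" "i \<in> {1..CARD('n)}"
  shows "eigenpair T \<kappa> (lam i) (xi i)"
  using assms unfolding leading_eigenpairs_def by blast

text \<open>A vanishing leading eigenvalue would force \<open>lam m \<le> 0\<close>, while \<open>\<Sigma> W\<close> has a positive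
  eigenvalue on the nonzero invariant subspace orthogonal to all \<open>mom (xi i)\<close>, whose eigenfunction
  is orthogonal to all \<open>xi i\<close>; this contradicts the maximality of \<open>lam m\<close>.\<close>
lemma leading_eigenvalue_nonzero:
  assumes eig: "leading_eigenpairs T \<kappa> CARD('n) lam xi" and j: "j \<in> {1..CARD('n)}"
  shows "lam j \<noteq> 0"
proof
  assume "lam j = 0"
  let ?I = "{1..CARD('n)}"
  define V where "V = {x. \<forall>i\<in>?I. mom (xi i) \<bullet> x = 0}"
  have "lam CARD('n) \<le> 0"
    using eig j \<open>lam j = 0\<close> unfolding leading_eigenpairs_def by fastforce
  have "mom (xi j) = 0"
    using leading_eigenpair[OF eig j] \<open>lam j = 0\<close> eigenpair_zero_moments by simp
  obtain x0 where "x0 \<noteq> 0" "\<And>i. i \<in> ?I \<Longrightarrow> mom (xi i) \<bullet> x0 = 0"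
    by (rule degenerate_family_orthogonal_exists[of ?I j "\<lambda>i. mom (xi i)"])
      (use j \<open>mom (xi j) = 0\<close> in simp_all)
  then have "V \<noteq> {0}" unfolding V_def by blast
  moreover have "subspace V"
    unfolding V_def subspace_def by (simp add: inner_add_right)
  moreover have "\<Sigma> *v (W *v x) \<in> V" if x: "x \<in> V" for x
  proof -
    have "mom (xi i) \<bullet> (\<Sigma> *v (W *v x)) = 0" if "i \<in> ?I" for i
      using inner_moments_Sigma_W[OF leading_eigenpair[OF eig that]] x that unfolding V_def by simp
    then show ?thesis unfolding V_def by blast
  qed
  ultimately obtain x M where x: "x \<in> V" "x \<noteq> 0" "\<Sigma> *v (W *v x) = M *\<^sub>R x"
    using symmetric_pencil_eigenvector_in_invariant_subspace[OF Sigma_symmetric W_symmetric W_pos_def]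
    by blast
  have "ipT T (\<lambda>t. x \<bullet> \<phi> t) (xi i) = 0" if "i \<in> ?I" for i
    using x(1) that integral_inner_mult[OF eigenpair_integrable[OF leading_eigenpair[OF eig that]], of x]
    unfolding ipT_def V_def by (simp add: inner_commute)
  then have "M \<le> lam CARD('n)"
    using eig eigenpair_of_eigenvector[OF x(2,3)] unfolding leading_eigenpairs_def by blast
  with eigenvector_eigenvalue_pos[OF x(2,3)] \<open>lam CARD('n) \<le> 0\<close> show False by simp
qed

text \<open>Read off from the eigen-equation \<open>\<mu> f(s) = \<phi>(s)' \<Sigma> (\<integral> \<phi> f)\<close>: for \<open>\<mu> \<noteq> 0\<close> the
  eigenfunction is \<open>eigencoord \<mu> f \<bullet> \<phi>\<close>.\<close>
definition eigencoord :: "real \<Rightarrow> (real \<Rightarrow> real) \<Rightarrow> real^'n" where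
  "eigencoord \<mu> f = (1 / \<mu>) *\<^sub>R (\<Sigma> *v mom f)"

lemma
  assumes "eigenpair T \<kappa> \<mu> f" "\<mu> \<noteq> 0"
  shows eigenpair_eq_eigencoord_AE: "AE t in lebesgue_on T. f t = eigencoord \<mu> f \<bullet> \<phi> t"
    and W_eigencoord: "W *v eigencoord \<mu> f = mom f"
    and Sigma_W_eigencoord: "\<Sigma> *v (W *v eigencoord \<mu> f) = \<mu> *\<^sub>R eigencoord \<mu> f"
proof -
  show "AE t in lebesgue_on T. f t = eigencoord \<mu> f \<bullet> \<phi> t"
    using eigenpair_AE[OF assms(1)]
    by eventually_elim (use assms(2) in \<open>auto simp: eigencoord_def inner_commute field_simps\<close>)
  then show W_b: "W *v eigencoord \<mu> f = mom f"
    unfolding mom_inner[symmetric]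
    by (intro moments_cong_AE eigenpair_integrable[OF assms(1)] integrable_component_mult_inner[OF phi_L2])
      (simp add: eventually_mono)
  show "\<Sigma> *v (W *v eigencoord \<mu> f) = \<mu> *\<^sub>R eigencoord \<mu> f"
    using assms(2) unfolding W_b by (simp add: eigencoord_def)
qed

lemma ipT_eigenpair:
  assumes "eigenpair T \<kappa> \<mu> f" "\<mu> \<noteq> 0" "L2_on T g"
  shows "ipT T g f = eigencoord \<mu> f \<bullet> mom g"
proof -
  have "ipT T g f = (\<integral>t. (eigencoord \<mu> f \<bullet> \<phi> t) * g t \<partial>lebesgue_on T)"
    unfolding ipT_def
    using eigenpair_eq_eigencoord_AE[OF assms(1,2)] eigenpair_measurable[OF assms(1)] assms(3)
      borel_measurable_inner[OF phi_L2] unfolding L2_on_def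
    by (intro integral_cong_AE) (auto simp: mult.commute)
  also have "\<dots> = eigencoord \<mu> f \<bullet> mom g"
    by (rule integral_inner_mult[OF L2_on_mult_integrable[OF phi_L2 assms(3)]])
  finally show ?thesis .
qed

lemma leading_eigencoords_W_orthonormal:
  assumes eig: "leading_eigenpairs T \<kappa> CARD('n) lam xi"
    and ij: "i \<in> {1..CARD('n)}" "j \<in> {1..CARD('n)}"
  shows "eigencoord (lam j) (xi j) \<bullet> (W *v eigencoord (lam i) (xi i)) = (if i = j then 1 else 0)"
proof -
  note pair = leading_eigenpair[OF eig] leading_eigenvalue_nonzero[OF eig]
  have "L2_on T (xi i)"
    using pair(1)[OF ij(1)] unfolding eigenpair_def by blast
  then have "ipT T (xi i) (xi j) = eigencoord (lam j) (xi j) \<bullet> (W *v eigencoord (lam i) (xi i))"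
    unfolding W_eigencoord[OF pair[OF ij(1)]] by (rule ipT_eigenpair[OF pair[OF ij(2)]])
  then show ?thesis
    using eig ij unfolding leading_eigenpairs_def by simp
qed

lemma fmd2_finite_rank:
  assumes eig: "leading_eigenpairs T \<kappa> CARD('n) lam xi"
    and L2: "L2_on T (\<lambda>t. Y t - \<mu> t)"
  shows "fmd2 T CARD('n) lam xi Y \<mu>
       = (matrix_inv W *v mom (\<lambda>t. Y t - \<mu> t)) \<bullet> (matrix_inv \<Sigma> *v (matrix_inv W *v mom (\<lambda>t. Y t - \<mu> t)))"
proof -
  let ?I = "{1..CARD('n)}"
  define u where "u = matrix_inv W *v mom (\<lambda>t. Y t - \<mu> t)"
  define b where "b i = eigencoord (lam i) (xi i)" for i
  note pair = leading_eigenpair[OF eig] leading_eigenvalue_nonzero[OF eig]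
  have ip: "ipT T (\<lambda>t. Y t - \<mu> t) (xi i) = (W *v b i) \<bullet> u" if "i \<in> ?I" for i
    unfolding ipT_eigenpair[OF pair[OF that] L2] b_def u_def inner_symmetric_matrix[OF W_symmetric, symmetric]
      matrix_inv_cancel_left[OF pos_def_mat_invertible[OF W_pos_def]] ..
  have Sigma_inv_b: "matrix_inv \<Sigma> *v b i = (1 / lam i) *\<^sub>R (W *v b i)" if "i \<in> ?I" for i
  proof -
    have "W *v b i = matrix_inv \<Sigma> *v (lam i *\<^sub>R b i)"
      unfolding b_def Sigma_W_eigencoord[OF pair[OF that], symmetric]
      by (rule matrix_cancel_inv_left[OF pos_def_mat_invertible[OF Sigma_pos_def], symmetric])
    then show ?thesis
      using pair(2)[OF that] by (simp add: matrix_vector_mult_scaleR)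
  qed
  have "u = (\<Sum>i\<in>?I. ((W *v b i) \<bullet> u) *\<^sub>R b i)"
    using leading_eigencoords_W_orthonormal[OF eig]
    by (intro biorthogonal_expansion) (simp_all add: b_def inner_commute)
  then have "u \<bullet> (matrix_inv \<Sigma> *v u) = u \<bullet> (matrix_inv \<Sigma> *v (\<Sum>i\<in>?I. ((W *v b i) \<bullet> u) *\<^sub>R b i))"
    by simp
  also have "\<dots> = (\<Sum>i\<in>?I. ((W *v b i) \<bullet> u)\<^sup>2 / lam i)"
    unfolding vec.sum inner_sum_right
    by (intro sum.cong refl) (simp add: matrix_vector_mult_scaleR Sigma_inv_b power2_eq_square inner_commute)
  also have "\<dots> = fmd2 T CARD('n) lam xi Y \<mu>"
    unfolding fmd2_def by (simp add: ip)
  finally show ?thesis unfolding u_def ..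
qed

text \<open>The coefficient vector of the \<open>L\<^sup>2(T)\<close>-projection of \<open>indicator S * (c \<bullet> \<phi>)\<close> onto the span of \<open>\<phi>\<close>.\<close>
definition proj_coord :: "real set \<Rightarrow> real^'n \<Rightarrow> real^'n" where
  "proj_coord S c = matrix_inv W *v (gram S \<phi> *v c)"

lemma proj_coord_disjoint_UN:
  assumes "finite R" "disjoint_family_on P R" "\<And>p. p \<in> R \<Longrightarrow> P p \<subseteq> T \<and> P p \<in> sets lebesgue"
  shows "proj_coord (\<Union>p\<in>R. P p) c = (\<Sum>p\<in>R. proj_coord (P p) c)"
proof -
  have "gram (\<Union>p\<in>R. P p) \<phi> = (\<Sum>p\<in>R. gram (P p) \<phi>)"
    by (rule gram_disjoint_UN[OF phi_L2 T_sets assms])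
  then show ?thesis
    unfolding proj_coord_def by (simp add: sum_matrix_vector_mult vec.sum)
qed

lemma proj_coord_T: "proj_coord T c = c"
  unfolding proj_coord_def using matrix_cancel_inv_left[OF pos_def_mat_invertible[OF W_pos_def]] .

lemma inner_proj_coord: "proj_coord S c \<bullet> y = c \<bullet> (gram S \<phi> *v (matrix_inv W *v y))"
proof -
  have "transpose (matrix_inv W) = matrix_inv W"
    using transpose_matrix_inv_symmetric[OF W_symmetric pos_def_mat_invertible[OF W_pos_def]] .
  then show ?thesis
    unfolding proj_coord_def
    by (simp add: inner_symmetric_matrix[OF transpose_gram] inner_symmetric_matrix[of "matrix_inv W"])
qed

lemma fmd2_Xhat:
  assumes eig: "leading_eigenpairs T \<kappa> CARD('n) lam xi"
    and U: "(\<Union>b\<in>R. P b) \<subseteq> T" "(\<Union>b\<in>R. P b) \<in> sets lebesgue"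
    and X: "\<And>t. X t - \<mu> t = c \<bullet> \<phi> t"
  shows "fmd2 T CARD('n) lam xi (Xhat P R X \<mu>) \<mu>
       = proj_coord (\<Union>b\<in>R. P b) c \<bullet> (matrix_inv \<Sigma> *v proj_coord (\<Union>b\<in>R. P b) c)"
proof -
  have "(\<lambda>t. Xhat P R X \<mu> t - \<mu> t) = (\<lambda>t. indicator (\<Union>b\<in>R. P b) t * (c \<bullet> \<phi> t))"
    by (intro ext) (simp add: Xhat_def X indicator_def)
  then show ?thesis
    using fmd2_finite_rank[OF eig, of "Xhat P R X \<mu>" \<mu>]
      L2_on_mult_indicator[OF U T_sets L2_on_inner[OF phi_L2]]
      moments_indicator_inner[OF phi_L2 U T_sets]
    by (simp add: proj_coord_def)
qed

lemma shapley_value_fmd2_partition: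
  assumes eig: "leading_eigenpairs T \<kappa> CARD('n) lam xi"
    and D: "finite D" "a \<in> D" "disjoint_family_on P D" "(\<Union>p\<in>D. P p) = T"
    and pieces: "\<And>p. p \<in> D \<Longrightarrow> P p \<in> sets lebesgue"
    and X: "\<And>t. X t - \<mu> t = c \<bullet> \<phi> t"
  shows "shapley_value D a (\<lambda>R. fmd2 T CARD('n) lam xi (Xhat P R X \<mu>) \<mu>)
       = c \<bullet> ((gram (P a) \<phi> ** matrix_inv W ** matrix_inv \<Sigma>) *v c)"
proof -
  have sub: "P p \<subseteq> T \<and> P p \<in> sets lebesgue" if "p \<in> D" for p
    using that D(4) pieces by blast
  have fmd: "fmd2 T CARD('n) lam xi (Xhat P R X \<mu>) \<mu>
      = (\<Sum>p\<in>R. proj_coord (P p) c) \<bullet> (matrix_inv \<Sigma> *v (\<Sum>p\<in>R. proj_coord (P p) c))"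
    if R: "R \<subseteq> D" for R
  proof -
    have "(\<Union>p\<in>R. P p) \<subseteq> T" using R sub by blast
    moreover have "(\<Union>p\<in>R. P p) \<in> sets lebesgue"
      using R sub by (intro sets.finite_UN finite_subset[OF R D(1)]) auto
    moreover have "proj_coord (\<Union>p\<in>R. P p) c = (\<Sum>p\<in>R. proj_coord (P p) c)"
      by (rule proj_coord_disjoint_UN[OF finite_subset[OF R D(1)] disjoint_family_on_mono[OF R D(3)]])
        (use R sub in blast)
    ultimately show ?thesis using fmd2_Xhat[OF eig _ _ X] by simp
  qed
  have "shapley_value D a (\<lambda>R. fmd2 T CARD('n) lam xi (Xhat P R X \<mu>) \<mu>)
      = shapley_value D a (\<lambda>R. (\<Sum>p\<in>R. proj_coord (P p) c) \<bullet> (matrix_inv \<Sigma> *v (\<Sum>p\<in>R. proj_coord (P p) c)))"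
    by (rule shapley_value_cong[OF D(2) fmd])
  also have "\<dots> = proj_coord (P a) c \<bullet> (matrix_inv \<Sigma> *v (\<Sum>p\<in>D. proj_coord (P p) c))"
    using transpose_matrix_inv_symmetric[OF Sigma_symmetric pos_def_mat_invertible[OF Sigma_pos_def]]
    by (rule shapley_value_quadratic_form[OF D(1,2)])
  also have "\<dots> = c \<bullet> ((gram (P a) \<phi> ** matrix_inv W ** matrix_inv \<Sigma>) *v c)"
    using proj_coord_disjoint_UN[OF D(1,3) sub] proj_coord_T
    by (simp add: D(4) inner_proj_coord matrix_vector_mul_assoc matrix_mul_assoc)
  finally show ?thesis .
qed

end

lemma theta_eq_shapley_value:
  "theta T P d a m lam xi X \<mu> = shapley_value {1..d} a (\<lambda>R. fmd2 T m lam xi (Xhat P R X \<mu>) \<mu>)"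
  unfolding theta_def shapley_value_def shapley_weight_def by simp

theorem lemma4:
  fixes M :: "'w measure"
    and A :: "'w \<Rightarrow> real^'m"
    and \<phi> :: "real \<Rightarrow> real^'m"
    and lo hi :: real
    and P :: "nat \<Rightarrow> real set"
    and d a :: nat
    and lam :: "nat \<Rightarrow> real"
    and xi :: "nat \<Rightarrow> real \<Rightarrow> real"
  defines "T \<equiv> {lo..hi}"
    and "ma \<equiv> (\<chi> i. integral\<^sup>L M (\<lambda>w. A w $ i))"
    and "\<Sigma> \<equiv> (\<chi> i j. integral\<^sup>L M (\<lambda>w. (A w $ i - integral\<^sup>L M (\<lambda>v. A v $ i)) * (A w $ j - integral\<^sup>L M (\<lambda>v. A v $ j))))"
  assumes prob: "prob_space M"
    and A_meas: "\<And>i. (\<lambda>w. A w $ i) \<in> borel_measurable M"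
    and A_sq: "\<And>i. integrable M (\<lambda>w. (A w $ i)^2)"
    and Sigma_pd: "pos_def_mat \<Sigma>"
    and d_pos: "d \<ge> 1"
    and parts_int: "\<And>b. b \<in> {1..d} \<Longrightarrow> is_interval (P b)"
    and parts_disj: "\<And>b c. b \<in> {1..d} \<Longrightarrow> c \<in> {1..d} \<Longrightarrow> b \<noteq> c \<Longrightarrow> P b \<inter> P c = {}"
    and parts_union: "(\<Union>b\<in>{1..d}. P b) = T"
    and phi_L2: "\<And>i. L2_on T (\<lambda>t. \<phi> t $ i)"
    and phi_indep: "\<And>c. (AE t in lebesgue_on T. c \<bullet> \<phi> t = 0) \<Longrightarrow> c = 0"
    and eig: "leading_eigenpairs T (\<lambda>s t. \<phi> s \<bullet> (\<Sigma> *v \<phi> t)) CARD('m) lam xi"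
    and a_in: "a \<in> {1..d}"
    and w_in: "\<omega> \<in> space M"
  shows "theta T P d a CARD('m) lam xi (\<lambda>t. A \<omega> \<bullet> \<phi> t) (\<lambda>t. ma \<bullet> \<phi> t)
         = (A \<omega> - ma) \<bullet> ((gram (P a) \<phi> ** matrix_inv (gram T \<phi>) ** matrix_inv \<Sigma>) *v (A \<omega> - ma))"
proof -
  \<comment> \<open>The identity holds pathwise: of the hypotheses on \<open>M\<close> and \<open>A\<close> only the symmetry and
    positive definiteness of \<open>\<Sigma>\<close> are used, and \<open>d \<ge> 1\<close> already follows from \<open>a \<in> {1..d}\<close>.\<close>
  have "transpose \<Sigma> = \<Sigma>"
    unfolding \<Sigma>_def by (simp add: transpose_def vec_eq_iff mult.commute)
  moreover have "T \<in> sets lebesgue" unfolding T_def by simp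
  ultimately interpret finite_rank_kernel T \<phi> \<Sigma>
    using phi_L2 phi_indep Sigma_pd by unfold_locales
  have "disjoint_family_on P {1..d}"
    using parts_disj unfolding disjoint_family_on_def by blast
  moreover have "P p \<in> sets lebesgue" if "p \<in> {1..d}" for p
    using is_interval_sets_lebesgue[OF parts_int[OF that]] .
  moreover have "A \<omega> \<bullet> \<phi> t - ma \<bullet> \<phi> t = (A \<omega> - ma) \<bullet> \<phi> t" for t
    by (simp add: inner_diff_left)
  ultimately show ?thesis
    unfolding theta_eq_shapley_value
    by (intro shapley_value_fmd2_partition[OF eig finite_atLeastAtMost a_in _ parts_union]) auto
qed

end
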